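(* Let $i$ be an even positive integer, $n=3i\pm1$, $q=2^n$, and $s=2^{2i}-2^i+1$. Let $B_s=\{(x+1)^s+x^s:x\in\mathrm{GF}(q)\}$ and let $d$ be the inverse of $s$ modulo $2^n-1$. Then for all $\mu\in\mathrm{GF}(q)$, \[\hat f_{B_s}(\mu)=\hat f_E(\mu^d)=\sum_{x\in\mathrm{GF}(q)}(-1)^{\mathrm{Tr}(x^{2^i+1}+\mu^dx)},\] where $E=\{x\in\mathrm{GF}(q):\mathrm{Tr}(x^{2^i+1})=1\}$.
   Context: $\mathrm{Tr}$ is the absolute trace $\mathrm{GF}(2^n)\to\mathrm{GF}(2)$. For $S\subseteq\mathrm{GF}(q)$, $f_S$ is its characteristic function as a Boolean function, and $\hat f(\mu)=\sum_{x\in\mathrm{GF}(2^n)}(-1)^{f(x)+\mathrm{Tr}(\mu x)}$ is the Walsh transform. Under the hypotheses, $\gcd(s,2^n-1)=1$, so $d$ exists. *)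

theory Defs
  imports "HOL-Analysis.Analysis"
begin

text \<open>The field GF(2^n) is modelled by an arbitrary finite field type of cardinality 2^n.
  Absolute trace GF(2^n) -> GF(2), valued in the prime subfield {0,1}.\<close>
definition Tr :: "nat \<Rightarrow> 'a::field \<Rightarrow> 'a" where
  "Tr n x = (\<Sum>k<n. x ^ (2 ^ k))"

definition Tr_bit :: "nat \<Rightarrow> 'a::field \<Rightarrow> bool" where
  "Tr_bit n x = (Tr n x \<noteq> 0)"

definition charf :: "'a set \<Rightarrow> 'a \<Rightarrow> bool" where
  "charf S x = (x \<in> S)"

definition walsh :: "nat \<Rightarrow> ('a::{field,finite} \<Rightarrow> bool) \<Rightarrow> 'a \<Rightarrow> int" where
  "walsh n f \<mu> = (\<Sum>x\<in>UNIV. (-1::int) ^ (of_bool (f x) + of_bool (Tr_bit n (\<mu> * x))))"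

end

theory Submission
  imports Defs "HOL-Computational_Algebra.Polynomial"
begin

text \<open>
  Let \<open>chi x = (-1) ^ Tr x\<close> and \<open>e = 2 ^ i + 1\<close>; since \<open>n\<close> is odd and coprime to \<open>i\<close>,
  \<open>x \<mapsto> x ^ e\<close> permutes the field. For the forms \<open>Q a y = y ^ 3 + a * y ^ e\<close> let
  \<open>W a = (\<Sum>y. chi (Q a y))\<close>. Squaring gives \<open>W a ^ 2 = q * N a\<close>, where \<open>N a\<close> sums
  \<open>chi (Q a)\<close> over the radical of the quadratic form \<open>Tr (Q a)\<close>; and since
  \<open>Tr ((u ^ e) ^ s) = Tr (u ^ 3)\<close>, the autocorrelation \<open>A l = (\<Sum>x. chi ((x + l) ^ s + x ^ s))\<close>
  satisfies \<open>q * A l = (\<Sum>a. chi (a * l) * W a ^ 2)\<close>.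

  The radical is computed with an auxiliary map \<open>F\<close>, different for \<open>n = 3 * i + 1\<close> and
  \<open>n = 3 * i - 1\<close>: each \<open>z \<noteq> 0\<close> lies in the radical for exactly two values of \<open>a\<close>, with
  opposite signs of \<open>chi (Q a z)\<close>, so \<open>(\<Sum>a. N a) = q\<close>. As \<open>N \<ge> 0\<close>, \<open>N \<noteq> 1\<close> (\<open>q\<close> is
  an odd power of 2), \<open>N \<ge> 2\<close> on \<open>E\<close> and \<open>card E = q / 2\<close>, this forces \<open>N = 2\<close> on \<open>E\<close>
  and \<open>N = 0\<close> elsewhere, i.e. \<open>A l = 2 * (\<Sum>a\<in>E. chi (a * l))\<close>.

  Finally \<open>D x = (x + 1) ^ s + x ^ s\<close> satisfies \<open>D (x + 1) = D x\<close>, and comparing Parseval's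
  identity for \<open>D\<close> and for \<open>A\<close> shows that \<open>D\<close> is injective on the trace-zero hyperplane.
  So the Walsh transforms of \<open>B_s\<close> at \<open>l ^ s\<close> and of \<open>E\<close> at \<open>l\<close> both equal
  \<open>q * [l = 0] - A l\<close>; take \<open>l = \<mu> ^ d\<close>.
\<close>

lemma square_neq_two_power_odd: "(w::int) ^ 2 \<noteq> 2 ^ (2 * k + 1)"
proof
  assume eq: "w ^ 2 = 2 ^ (2 * k + 1)"
  hence "w \<noteq> 0" by auto
  hence "multiplicity 2 (w ^ 2) = 2 * multiplicity 2 w"
    by (simp add: prime_elem_multiplicity_power_distrib)
  moreover have "multiplicity 2 ((2::int) ^ (2 * k + 1)) = 2 * k + 1"
    by (intro multiplicity_same_power) auto
  ultimately have "2 * multiplicity 2 w = 2 * k + 1" using eq by simp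
  thus False by presburger
qed

lemma sum_comp_inj_UNIV:
  fixes f :: "'a::finite \<Rightarrow> 'a"
  assumes "inj f"
  shows "(\<Sum>x\<in>UNIV. g (f x)) = (\<Sum>x\<in>UNIV. g x)"
proof -
  have "bij f" using assms finite_UNIV_inj_surj[of f] by (simp add: bij_def)
  thus ?thesis using sum.reindex_bij_betw[of f UNIV UNIV g] by simp
qed

lemma sum_add_shift_UNIV: "(\<Sum>x\<in>UNIV. f (c + x)) = (\<Sum>x\<in>(UNIV::'a::{finite,group_add} set). f x)"
  by (rule sum_comp_inj_UNIV) (simp add: inj_on_def)

lemma power_power_two_pow: "(x ^ (2 ^ a)) ^ (2 ^ b) = (x::'a::monoid_mult) ^ (2 ^ (a + b))"
  by (simp add: power_mult[symmetric] power_add)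

lemma finite_field_power_card_minus_1:
  fixes x :: "'a::{field,finite}"
  assumes "x \<noteq> 0"
  shows "x ^ (CARD('a) - 1) = 1"
proof -
  let ?U = "UNIV - {0::'a}"
  have "(\<Prod>y\<in>?U. x * y) = (\<Prod>y\<in>?U. y)"
    by (rule prod.reindex_bij_witness[of _ "\<lambda>y. y / x" "\<lambda>y. x * y"]) (use assms in auto)
  moreover have "(\<Prod>y\<in>?U. x * y) = x ^ (CARD('a) - 1) * (\<Prod>y\<in>?U. y)"
    by (simp add: prod.distrib card_Diff_subset)
  moreover have "(\<Prod>y\<in>?U. y) \<noteq> 0" by simp
  ultimately show ?thesis by simp
qed

lemma finite_field_power_card: "(x::'a::{field,finite}) ^ CARD('a) = x"
proof (cases "x = 0")
  case False
  have "x ^ CARD('a) = x * x ^ (CARD('a) - 1)" by (simp add: power_Suc[symmetric])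
  thus ?thesis using finite_field_power_card_minus_1[OF False] by simp
qed simp

lemma finite_field_power_inverse_exponent:
  fixes x :: "'a::{field,finite}"
  assumes "(s * d) mod (CARD('a) - 1) = 1"
  shows "(x ^ d) ^ s = x"
proof (cases "x = 0")
  case True
  have "s * d \<noteq> 0" using assms by (intro notI) simp
  thus ?thesis using True by (simp add: power_mult[symmetric] mult.commute)
next
  case False
  define k where "k = s * d div (CARD('a) - 1)"
  have "(CARD('a) - 1) * k + 1 = d * s"
    using mult_div_mod_eq[of "CARD('a) - 1" "s * d"] unfolding k_def assms by (simp add: mult.commute)
  hence "(x ^ d) ^ s = x ^ ((CARD('a) - 1) * k + 1)" by (simp only: power_mult)
  also have "\<dots> = (x ^ (CARD('a) - 1)) ^ k * x" by (simp only: power_add power_mult power_one_right)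
  finally show ?thesis using finite_field_power_card_minus_1[OF False] by simp
qed

lemma kasami_exponent_product: "((2::nat) ^ i + 1) * (2 ^ (2 * i) - 2 ^ i + 1) = 2 ^ (3 * i) + 1"
proof -
  define t :: nat where "t = 2 ^ i"
  have "t \<le> t * t" by (simp add: t_def)
  hence "int ((t + 1) * (t * t - t + 1)) = int (t * t * t + 1)"
    by (simp add: of_nat_diff algebra_simps)
  hence "(t + 1) * (t * t - t + 1) = t * t * t + 1" by (simp only: of_nat_eq_iff)
  moreover have "t * t = 2 ^ (2 * i)" "t * t * t = 2 ^ (3 * i)"
    unfolding t_def by (simp_all flip: power_add)
  ultimately show ?thesis unfolding t_def by simp
qed

locale char2 =
  fixes ty :: "'a::comm_ring_1 itself"
  assumes two_eq_zero: "(2::'a) = 0"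
begin

lemma add_self [simp]: "(x::'a) + x = 0"
  by (simp add: mult_2[symmetric] two_eq_zero)

lemma add_self_left: "(x::'a) + (x + y) = y"
  by (simp add: add.assoc[symmetric])

lemma uminus_eq_self [simp]: "- (x::'a) = x"
  using add_eq_0_iff[of x x] by simp

lemma add_eq_0_iff_eq: "(x::'a) + y = 0 \<longleftrightarrow> x = y"
  using add_eq_0_iff[of x y] by auto

lemma add_eq_iff_eq_add: "(x::'a) + y = z \<longleftrightarrow> x = z + y"
  by (metis eq_diff_eq diff_minus_eq_add uminus_eq_self)

lemma three_eq_one: "(3::'a) = 1"
proof -
  have "(3::'a) = 2 + 1" by simp
  thus ?thesis by (simp add: two_eq_zero)
qed

lemma frobenius_add: "((x::'a) + y) ^ (2 ^ k) = x ^ (2 ^ k) + y ^ (2 ^ k)"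
proof (induction k)
  case (Suc k)
  have "(x + y) ^ (2 ^ Suc k) = ((x + y) ^ (2 ^ k)) ^ 2"
    by (simp add: power_mult[symmetric] mult.commute)
  also have "\<dots> = (x ^ (2 ^ k)) ^ 2 + (y ^ (2 ^ k)) ^ 2"
    using Suc two_eq_zero by (simp add: power2_sum)
  finally show ?case by (simp add: power_mult[symmetric] mult.commute)
qed simp

lemma frobenius_sum: "(\<Sum>j\<in>A. f j :: 'a) ^ (2 ^ k) = (\<Sum>j\<in>A. f j ^ (2 ^ k))"
  by (induction A rule: infinite_finite_induct) (simp_all add: frobenius_add power_0_left)

end

locale gf2n =
  fixes n :: nat and ty :: "'a::{field,finite} itself"
  assumes card_eq: "CARD('a) = 2 ^ n"
begin

lemma n_pos: "0 < n"
proof -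
  have "card {0::'a, 1} \<le> CARD('a)" by (intro card_mono) auto
  thus ?thesis using card_eq by (cases n) auto
qed

lemma power_two_pow_n: "(x::'a) ^ (2 ^ n) = x"
  using finite_field_power_card[of x] card_eq by simp

sublocale char2 ty
proof
  have "(-1::'a) = (-1) ^ (2 ^ n)" by (rule power_two_pow_n[symmetric])
  also have "\<dots> = 1" using n_pos by (intro neg_one_even_power) simp
  finally have "1 + 1 = (0::'a)" by (metis add.right_inverse)
  thus "(2::'a) = 0" by simp
qed

lemma power_two_pow_reduce: "(x::'a) ^ (2 ^ (n * m + k)) = x ^ (2 ^ k)"
proof (induction m)
  case (Suc m)
  have "x ^ (2 ^ (n * Suc m + k)) = (x ^ (2 ^ (n * m + k))) ^ (2 ^ n)"
    by (simp only: power_power_two_pow) (simp add: algebra_simps)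
  also have "\<dots> = x ^ (2 ^ k)" by (simp only: power_two_pow_n Suc.IH)
  finally show ?case .
qed simp

lemma power_two_pow_n_add: "(x::'a) ^ (2 ^ (n + k)) = x ^ (2 ^ k)"
  using power_two_pow_reduce[of x 1 k] by simp

lemma cube_power_two_pow: "((x::'a) ^ 3) ^ (2 ^ k) = (x ^ (2 ^ k)) ^ 3"
  by (metis power_mult mult.commute)

lemma frobenius_inj:
  assumes "(x::'a) ^ (2 ^ k) = y ^ (2 ^ k)"
  shows "x = y"
proof -
  have "(x + y) ^ (2 ^ k) = 0" using assms by (simp add: frobenius_add add_eq_0_iff_eq)
  thus ?thesis by (simp add: add_eq_0_iff_eq)
qed

lemma frobenius_surj: "\<exists>y::'a. y ^ (2 ^ k) = z"
proof -
  have "inj (\<lambda>y::'a. y ^ (2 ^ k))" by (rule injI) (rule frobenius_inj)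
  hence "surj (\<lambda>y::'a. y ^ (2 ^ k))" by (rule finite_UNIV_inj_surj[rotated]) simp
  thus ?thesis by (metis surjD)
qed

lemma frobenius_fixed_iff:
  assumes "coprime k n" and "0 < k"
  shows "(x::'a) ^ (2 ^ k) = x \<longleftrightarrow> x = 0 \<or> x = 1"
proof
  assume fixed: "x ^ (2 ^ k) = x"
  have iter: "x ^ (2 ^ (k * m)) = x" for m
  proof (induction m)
    case (Suc m)
    have "x ^ (2 ^ (k * Suc m)) = (x ^ (2 ^ (k * m))) ^ (2 ^ k)"
      by (simp only: power_power_two_pow) (simp add: algebra_simps)
    thus ?case by (simp only: Suc.IH fixed)
  qed simp
  obtain u v where "k * u = n * v + gcd k n" using bezout_nat[of k n] assms(2) by blast
  hence uv: "k * u = n * v + 1" using assms(1) by simp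
  have "x = x ^ (2 ^ (k * u))" by (rule iter[symmetric])
  also have "\<dots> = x ^ (2 ^ 1)" by (simp only: uv power_two_pow_reduce)
  finally have "x * (x - 1) = 0" by (simp add: power2_eq_square algebra_simps)
  thus "x = 0 \<or> x = 1" by simp
qed (auto simp: power_0_left)

lemma Tr_add: "Tr n ((x::'a) + y) = Tr n x + Tr n y"
  unfolding Tr_def by (simp add: frobenius_add sum.distrib)

lemma Tr_zero [simp]: "Tr n (0::'a) = 0"
  unfolding Tr_def by (simp add: power_0_left)

lemma Tr_square: "Tr n ((x::'a) ^ 2) = Tr n x"
proof -
  let ?f = "\<lambda>k. x ^ (2 ^ k)"
  have "(\<Sum>k<n. ?f (Suc k)) = Tr n (x ^ 2)"
    unfolding Tr_def by (intro sum.cong refl) (simp add: power_mult[symmetric] mult.commute)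
  hence "x + Tr n (x ^ 2) = (\<Sum>k<Suc n. ?f k)" by (simp only: sum.lessThan_Suc_shift) simp
  also have "\<dots> = Tr n x + x" unfolding Tr_def by (simp add: power_two_pow_n)
  finally show ?thesis by (simp add: add.commute)
qed

lemma Tr_power_two_pow: "Tr n ((x::'a) ^ (2 ^ k)) = Tr n x"
proof (induction k)
  case (Suc k)
  have "x ^ (2 ^ Suc k) = (x ^ (2 ^ k)) ^ 2" by (simp add: power_mult[symmetric] mult.commute)
  thus ?case using Suc Tr_square by simp
qed simp

lemma Tr_cases: "Tr n (x::'a) = 0 \<or> Tr n x = 1"
proof -
  have "(Tr n x) ^ 2 = Tr n x"
    using frobenius_sum[of "\<lambda>k. x ^ (2 ^ k)" "{..<n}" 1] Tr_square[of x]
    unfolding Tr_def by (simp add: power_mult[symmetric] mult.commute)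
  hence "Tr n x * (Tr n x - 1) = 0" by (simp add: power2_eq_square algebra_simps)
  thus ?thesis by simp
qed

lemma Tr_one: "odd n \<Longrightarrow> Tr n (1::'a) = 1"
  unfolding Tr_def by (auto elim!: oddE simp: two_eq_zero)

text \<open>The trace is a nonzero polynomial of degree \<open>2 ^ (n - 1) < CARD('a)\<close>.\<close>
lemma Tr_not_identically_zero: "\<exists>x::'a. Tr n x \<noteq> 0"
proof (rule ccontr)
  assume none: "\<nexists>x::'a. Tr n x \<noteq> 0"
  define p :: "'a poly" where "p = (\<Sum>k<n. monom 1 (2 ^ k))"
  have roots: "{x. poly p x = 0} = UNIV"
    using none unfolding p_def Tr_def by (simp add: poly_sum poly_monom)
  have "coeff p (2 ^ (n - 1)) = (\<Sum>k<n. if k = n - 1 then 1 else 0)"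
    unfolding p_def by (simp add: coeff_sum coeff_monom power_inject_exp)
  hence "p \<noteq> 0" using n_pos by auto
  have "degree p \<le> 2 ^ (n - 1)"
    unfolding p_def by (intro degree_sum_le) (auto simp: degree_monom_eq)
  hence "CARD('a) \<le> 2 ^ (n - 1)"
    using card_poly_roots_bound[OF \<open>p \<noteq> 0\<close>] roots by simp
  thus False using card_eq n_pos by simp
qed

definition chi :: "'a \<Rightarrow> int" where
  "chi x = (-1) ^ of_bool (Tr_bit n x)"

lemma chi_eq: "chi x = (if Tr n x = 0 then 1 else -1)"
  unfolding chi_def Tr_bit_def by simp

lemma chi_add: "chi (x + y) = chi x * chi y"
  using Tr_cases[of x] Tr_cases[of y] by (auto simp: chi_eq Tr_add)

lemma chi_zero [simp]: "chi 0 = 1"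
  by (simp add: chi_eq)

lemma chi_mult_self [simp]: "chi x * chi x = 1"
  by (simp add: chi_eq)

lemma chi_one: "odd n \<Longrightarrow> chi 1 = -1"
  by (simp add: chi_eq Tr_one)

lemma chi_power_two_pow: "chi (x ^ (2 ^ k)) = chi x"
  by (simp add: chi_eq Tr_power_two_pow)

lemma chi_mult_frobenius:
  assumes "k \<le> n"
  shows "chi (u ^ (2 ^ k) * w) = chi (u * w ^ (2 ^ (n - k)))"
proof -
  have "(u * w ^ (2 ^ (n - k))) ^ (2 ^ k) = u ^ (2 ^ k) * w"
    using assms by (simp add: power_mult_distrib power_power_two_pow power_two_pow_n)
  thus ?thesis by (metis chi_power_two_pow)
qed

lemma sum_chi: "(\<Sum>x\<in>UNIV. chi x) = 0"
proof -
  obtain c :: 'a where c: "chi c = -1" using Tr_not_identically_zero by (auto simp: chi_eq)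
  have "(\<Sum>x\<in>UNIV. chi x) = (\<Sum>x\<in>UNIV. chi (c + x))" by (rule sum_add_shift_UNIV[symmetric])
  also have "\<dots> = - (\<Sum>x\<in>UNIV. chi x)" by (simp add: chi_add c sum_negf)
  finally show ?thesis by simp
qed

lemma sum_chi_mult: "(\<Sum>x\<in>UNIV. chi (a * x)) = (if a = 0 then int CARD('a) else 0)"
proof (cases "a = 0")
  case False
  hence "inj ((*) a)" by (simp add: inj_on_def)
  thus ?thesis using sum_comp_inj_UNIV[of "(*) a" chi] sum_chi False by simp
qed simp

lemma parseval:
  "(\<Sum>\<mu>\<in>UNIV. (\<Sum>y\<in>UNIV. g y * chi (\<mu> * y)) ^ 2) = int CARD('a) * (\<Sum>y\<in>UNIV. (g y) ^ 2)"
proof -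
  have pair: "chi (\<mu> * y) * chi (\<mu> * y') = chi ((y + y') * \<mu>)" for \<mu> y y'
    by (simp only: chi_add[symmetric]) (simp add: algebra_simps)
  have square: "(\<Sum>y\<in>UNIV. g y * chi (\<mu> * y)) ^ 2
      = (\<Sum>y\<in>UNIV. \<Sum>y'\<in>UNIV. g y * g y' * chi ((y + y') * \<mu>))" for \<mu>
    unfolding power2_eq_square sum_product pair[symmetric]
    by (intro sum.cong refl) (simp only: mult_ac)
  have orth: "(\<Sum>\<mu>\<in>UNIV. g y * g y' * chi ((y + y') * \<mu>))
      = (if y = y' then int CARD('a) * (g y * g y') else 0)" for y y'
    by (simp only: sum_distrib_left[symmetric] sum_chi_mult add_eq_0_iff_eq) simp
  have "(\<Sum>\<mu>\<in>UNIV. (\<Sum>y\<in>UNIV. g y * chi (\<mu> * y)) ^ 2)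
      = (\<Sum>y\<in>UNIV. \<Sum>y'\<in>UNIV. \<Sum>\<mu>\<in>UNIV. g y * g y' * chi ((y + y') * \<mu>))"
    unfolding square by (subst sum.swap) (rule sum.cong[OF refl], rule sum.swap)
  also have "\<dots> = (\<Sum>y\<in>UNIV. \<Sum>y'\<in>UNIV. if y = y' then int CARD('a) * (g y * g y') else 0)"
    by (simp only: orth)
  also have "\<dots> = int CARD('a) * (\<Sum>y\<in>UNIV. (g y) ^ 2)"
    by (simp only: sum.delta'[OF finite] UNIV_I if_True) (simp add: sum_distrib_left power2_eq_square)
  finally show ?thesis .
qed

lemma walsh_charf:
  "walsh n (charf S) \<mu> = (if \<mu> = 0 then int CARD('a) else 0) - 2 * (\<Sum>y\<in>S. chi (\<mu> * y))"
proof -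
  have "walsh n (charf S) \<mu> = (\<Sum>y\<in>UNIV. chi (\<mu> * y) - 2 * (if y \<in> S then chi (\<mu> * y) else 0))"
    unfolding walsh_def charf_def chi_def by (intro sum.cong refl) (simp add: power_add)
  also have "\<dots> = (\<Sum>y\<in>UNIV. chi (\<mu> * y)) - 2 * (\<Sum>y\<in>UNIV. if y \<in> S then chi (\<mu> * y) else 0)"
    by (simp add: sum_subtractf sum_distrib_left)
  also have "(\<Sum>y\<in>UNIV. if y \<in> S then chi (\<mu> * y) else 0) = (\<Sum>y\<in>S. chi (\<mu> * y))"
    by (simp add: sum.If_cases)
  finally show ?thesis by (simp add: sum_chi_mult)
qed

lemma walsh_charf_Tr_eq_1:
  "walsh n (charf {x. Tr n (f x) = 1}) \<mu> = (\<Sum>x\<in>UNIV. chi (f x + \<mu> * x))"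
  unfolding walsh_def chi_add
proof (intro sum.cong refl)
  fix x
  have "(Tr n (f x) = 1) = Tr_bit n (f x)" using Tr_cases[of "f x"] by (auto simp: Tr_bit_def)
  thus "(-1) ^ (of_bool (charf {x. Tr n (f x) = 1} x) + of_bool (Tr_bit n (\<mu> * x)))
      = chi (f x) * chi (\<mu> * x)"
    by (simp add: charf_def chi_def power_add)
qed

lemma inj_gold_power:
  assumes "coprime (2 * k) n" and "0 < k"
  shows "inj (\<lambda>x::'a. x ^ (2 ^ k + 1))"
proof (rule injI)
  fix x y :: 'a
  assume eq: "x ^ (2 ^ k + 1) = y ^ (2 ^ k + 1)"
  show "x = y"
  proof (cases "y = 0")
    case False
    define u where "u = x / y"
    have u1: "u ^ (2 ^ k) * u = 1" using eq False by (simp add: u_def power_divide power_add mult.commute)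
    hence "u \<noteq> 0" by auto
    hence inv: "u ^ (2 ^ k) = inverse u" using u1 by (simp add: field_simps)
    have "u ^ (2 ^ (2 * k)) = (u ^ (2 ^ k)) ^ (2 ^ k)" by (simp add: power_power_two_pow mult_2)
    also have "\<dots> = u" by (simp add: inv power_inverse)
    finally have "u = 1"
      using frobenius_fixed_iff[of "2 * k" u] assms \<open>u \<noteq> 0\<close> by auto
    thus ?thesis using False by (simp add: u_def)
  qed (use eq in simp)
qed

text \<open>\<open>X * X ^ r\<close> splits into five pairs \<open>p + (p ^ r) ^ r\<close> or \<open>g ^ 2 + g ^ r\<close>, each of trace 0.\<close>
lemma Tr_frobenius_cycle:
  fixes y y1 y2 :: 'a
  assumes "y \<noteq> 0"
    and cycle: "y ^ (2 ^ k) = y1" "y1 ^ (2 ^ k) = y2" "y2 ^ (2 ^ k) = y ^ 2"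
  shows "Tr n (((1 + y ^ 3 + y1 ^ 3 + y2 ^ 3) / (y ^ 2 * y2))
               * ((1 + y ^ 3 + y1 ^ 3 + y2 ^ 3) / (y ^ 2 * y2)) ^ (2 ^ k)) = 0"
proof -
  let ?r = "2 ^ k :: nat"
  have nz: "y1 \<noteq> 0" "y2 \<noteq> 0" using assms by (metis power_not_zero)+
  have rho: "(y ^ m) ^ ?r = y1 ^ m" "(y1 ^ m) ^ ?r = y2 ^ m" "(y2 ^ m) ^ ?r = (y ^ 2) ^ m" for m
    using cycle by (metis power_mult mult.commute)+
  define A B C D where "A = y ^ 3" and "B = y1 ^ 3" and "C = y2 ^ 3" and "D = y ^ 2 * y2 * (y1 ^ 2 * y ^ 2)"
  define g where "g = y * y2 / y1"
  define X where "X = (1 + A + B + C) / (y ^ 2 * y2)"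
  have rho_X: "X ^ ?r = (1 + B + C + A ^ 2) / (y1 ^ 2 * y ^ 2)"
    unfolding X_def A_def B_def C_def
    by (simp add: power_divide power_mult_distrib frobenius_add rho cycle)
  have "X * X ^ ?r = ((1 + A + B + C) * (1 + B + C + A ^ 2)) / D"
    unfolding rho_X D_def by (simp only: X_def times_divide_times_eq)
  also have "(1 + A + B + C) * (1 + B + C + A ^ 2)
      = (1 + A) + (A ^ 3 + C ^ 2) + (A * C + B ^ 2) + (A * B + A ^ 2) + (A ^ 2 * C + A ^ 2 * B)
        + 2 * (B + C + B * C)"
    by (simp add: algebra_simps power2_eq_square power3_eq_cube)
  finally have "X * X ^ ?r = (A / D + 1 / D) + (A ^ 3 / D + C ^ 2 / D) + (A * C / D + B ^ 2 / D)
      + (A * B / D + A ^ 2 / D) + (A ^ 2 * C / D + A ^ 2 * B / D)"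
    by (simp add: two_eq_zero add_divide_distrib)
  moreover have "1 / D = ((A / D) ^ ?r) ^ ?r" "C ^ 2 / D = ((A ^ 3 / D) ^ ?r) ^ ?r"
    "B ^ 2 / D = ((A * C / D) ^ ?r) ^ ?r" "A ^ 2 / D = ((A * B / D) ^ ?r) ^ ?r"
    "A ^ 2 * C / D = g ^ 2" "A ^ 2 * B / D = g ^ ?r"
    using assms nz unfolding A_def B_def C_def D_def g_def
    by (simp_all add: power_divide power_mult_distrib rho cycle)
      (simp_all add: field_simps eval_nat_numeral mult_ac)
  ultimately show ?thesis
    unfolding X_def A_def B_def C_def
    by (simp only: Tr_add power_power_two_pow Tr_power_two_pow Tr_square add_self add_0)
qed

end

text \<open>
  \<open>F\<close> is an explicit solution of the linearized equation that describes the radical of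
  \<open>Tr (y ^ 3 + a * y ^ e)\<close> (see \<open>L_eq_0_iff\<close>); \<open>Tr_shifted_root\<close> says that the second
  parameter \<open>(F (z ^ 3) + 1) / z ^ e\<close> of that radical lies outside \<open>E\<close>.
\<close>
locale kasami = gf2n n ty for n and ty :: "'a::{field,finite} itself" +
  fixes i s :: nat and F :: "'a \<Rightarrow> 'a"
  assumes odd_n: "odd n" and i_pos: "0 < i" and i_less_n: "i < n" and coprime_i_n: "coprime i n"
    and F_eq: "\<And>w. F w + F w ^ (2 ^ i) = w ^ (2 ^ i) + w ^ (2 ^ (i - 1))"
    and Tr_F: "\<And>w. Tr n (F w) = Tr n w"
    and Tr_shifted_root:
      "\<And>z. z \<noteq> 0 \<Longrightarrow> Tr n (((F (z ^ 3) + 1) / z ^ (2 ^ i + 1)) ^ (2 ^ i + 1)) = 0"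
    and Tr_power_s: "\<And>u::'a. Tr n ((u ^ (2 ^ i + 1)) ^ s) = Tr n (u ^ 3)"
begin

abbreviation e :: nat where "e \<equiv> 2 ^ i + 1"

lemma inj_power_e: "inj (\<lambda>x::'a. x ^ e)"
  using inj_gold_power[of i] coprime_i_n odd_n i_pos by simp

definition Q :: "'a \<Rightarrow> 'a \<Rightarrow> 'a" where
  "Q a y = y ^ 3 + a * y ^ e"

definition W :: "'a \<Rightarrow> int" where
  "W a = (\<Sum>y\<in>UNIV. chi (Q a y))"

text \<open>The kernel of \<open>L a\<close> is the radical of the quadratic form \<open>y \<mapsto> Tr (Q a y)\<close>.\<close>
definition L :: "'a \<Rightarrow> 'a \<Rightarrow> 'a" where
  "L a z = z ^ (2 ^ (n - 1)) + z ^ 2 + (a * z) ^ (2 ^ (n - i)) + a * z ^ (2 ^ i)"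

definition N :: "'a \<Rightarrow> int" where
  "N a = (\<Sum>z\<in>{z. L a z = 0}. chi (Q a z))"

definition A :: "'a \<Rightarrow> int" where
  "A l = (\<Sum>x\<in>UNIV. chi ((x + l) ^ s + x ^ s))"

lemma L_zero [simp]: "L a 0 = 0"
  unfolding L_def using i_less_n by (simp add: power_0_left)

lemma Q_zero [simp]: "Q a 0 = 0"
  unfolding Q_def by simp

lemma chi_Q_add: "chi (Q a (u + z)) = chi (Q a u) * chi (Q a z) * chi (u * L a z)"
proof -
  have "(u + z) ^ 3 = u ^ 3 + z ^ 3 + 3 * (u ^ 2 * z + u * z ^ 2)"
    by (simp add: power3_eq_cube power2_eq_square algebra_simps)
  moreover have "(u + z) ^ e = (u ^ (2 ^ i) + z ^ (2 ^ i)) * (u + z)"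
    by (simp add: frobenius_add)
  ultimately have "Q a (u + z) = Q a u + Q a z
      + (u ^ 2 * z + u * z ^ 2 + a * u ^ (2 ^ i) * z + a * u * z ^ (2 ^ i))"
    unfolding Q_def three_eq_one by (simp add: algebra_simps power2_eq_square)
  hence "chi (Q a (u + z)) = chi (Q a u) * chi (Q a z)
      * (chi (u ^ 2 * z) * chi (u * z ^ 2) * chi (a * u ^ (2 ^ i) * z) * chi (a * u * z ^ (2 ^ i)))"
    by (simp only: chi_add mult.assoc)
  moreover have "chi (u ^ 2 * z) = chi (u * z ^ (2 ^ (n - 1)))"
    using chi_mult_frobenius[of 1 u z] n_pos by simp
  moreover have "chi (a * u ^ (2 ^ i) * z) = chi (u * (a * z) ^ (2 ^ (n - i)))"
    using chi_mult_frobenius[of i u "a * z"] i_less_n by (simp add: mult_ac)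
  moreover have "chi (u * L a z) = chi (u * z ^ (2 ^ (n - 1))) * chi (u * z ^ 2)
      * chi (u * (a * z) ^ (2 ^ (n - i))) * chi (a * u * z ^ (2 ^ i))"
    unfolding L_def by (simp only: distrib_left chi_add mult_ac)
  ultimately show ?thesis by simp
qed

lemma W_square: "(W a) ^ 2 = int CARD('a) * N a"
proof -
  have shift: "(\<Sum>v\<in>UNIV. chi (Q a u) * chi (Q a v)) = (\<Sum>z\<in>UNIV. chi (Q a u) * chi (Q a (u + z)))"
    for u
    using sum_add_shift_UNIV[of "\<lambda>v. chi (Q a u) * chi (Q a v)" u] by simp
  have "(W a) ^ 2 = (\<Sum>u\<in>UNIV. \<Sum>z\<in>UNIV. chi (Q a u) * chi (Q a (u + z)))"
    by (simp only: W_def power2_eq_square sum_product shift)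
  also have "\<dots> = (\<Sum>u\<in>UNIV. \<Sum>z\<in>UNIV. chi (Q a z) * chi (L a z * u))"
    by (intro sum.cong refl) (simp add: chi_Q_add mult.commute mult.left_commute)
  also have "\<dots> = (\<Sum>z\<in>UNIV. chi (Q a z) * (\<Sum>u\<in>UNIV. chi (L a z * u)))"
    by (subst sum.swap) (simp add: sum_distrib_left)
  also have "\<dots> = (\<Sum>z\<in>UNIV. if L a z = 0 then int CARD('a) * chi (Q a z) else 0)"
    by (intro sum.cong refl) (simp add: sum_chi_mult)
  also have "\<dots> = int CARD('a) * N a"
    unfolding N_def by (simp add: sum.If_cases sum_distrib_left)
  finally show ?thesis .
qed

lemma chi_mult_W_square:
  "chi (a * l) * (W a) ^ 2
     = (\<Sum>u\<in>UNIV. \<Sum>v\<in>UNIV. chi (u ^ 3 + v ^ 3) * chi ((u ^ e + v ^ e + l) * a))"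
proof -
  have pointwise: "chi (a * l) * (chi (Q a u) * chi (Q a v))
      = chi (u ^ 3 + v ^ 3) * chi ((u ^ e + v ^ e + l) * a)" for u v
  proof -
    have "chi (a * l) * (chi (Q a u) * chi (Q a v)) = chi (a * l + Q a u + Q a v)"
      by (simp add: chi_add)
    also have "a * l + Q a u + Q a v = (u ^ 3 + v ^ 3) + (u ^ e + v ^ e + l) * a"
      unfolding Q_def by (simp add: algebra_simps)
    finally show ?thesis by (simp only: chi_add)
  qed
  show ?thesis
    by (simp only: W_def power2_eq_square sum_product) (simp only: sum_distrib_left pointwise)
qed

lemma A_eq_sum_W_square: "int CARD('a) * A l = (\<Sum>a\<in>UNIV. chi (a * l) * (W a) ^ 2)"
proof -
  let ?q = "int CARD('a)"
  define h where "h x w = (if x + w + l = 0 then ?q * chi (x ^ s + w ^ s) else 0)" for x w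
  have "(\<Sum>a\<in>UNIV. chi (a * l) * (W a) ^ 2)
      = (\<Sum>u\<in>UNIV. \<Sum>v\<in>UNIV.
           chi (u ^ 3 + v ^ 3) * (\<Sum>a\<in>UNIV. chi ((u ^ e + v ^ e + l) * a)))"
    unfolding chi_mult_W_square sum_distrib_left
    by (subst sum.swap) (rule sum.cong[OF refl], rule sum.swap)
  also have "\<dots> = (\<Sum>u\<in>UNIV. \<Sum>v\<in>UNIV. h (u ^ e) (v ^ e))"
  proof (intro sum.cong refl)
    fix u v :: 'a
    have "chi (u ^ 3 + v ^ 3) = chi ((u ^ e) ^ s + (v ^ e) ^ s)"
      by (simp only: chi_add) (simp only: chi_eq Tr_power_s)
    thus "chi (u ^ 3 + v ^ 3) * (\<Sum>a\<in>UNIV. chi ((u ^ e + v ^ e + l) * a)) = h (u ^ e) (v ^ e)"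
      by (simp add: h_def sum_chi_mult)
  qed
  also have "\<dots> = (\<Sum>u\<in>UNIV. \<Sum>w\<in>UNIV. h (u ^ e) w)"
    by (rule sum.cong[OF refl]) (rule sum_comp_inj_UNIV[OF inj_power_e])
  also have "\<dots> = (\<Sum>x\<in>UNIV. \<Sum>w\<in>UNIV. h x w)"
    by (rule sum_comp_inj_UNIV[OF inj_power_e, of "\<lambda>x. \<Sum>w\<in>UNIV. h x w"])
  also have "\<dots> = (\<Sum>x\<in>UNIV. ?q * chi ((x + l) ^ s + x ^ s))"
  proof (intro sum.cong refl)
    fix x
    have "x + w + l = 0 \<longleftrightarrow> w = x + l" for w
      using add_eq_0_iff_eq[of w "x + l"] by (simp add: ac_simps)
    thus "(\<Sum>w\<in>UNIV. h x w) = ?q * chi ((x + l) ^ s + x ^ s)"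
      by (simp add: h_def add.commute)
  qed
  finally show ?thesis unfolding A_def by (simp add: sum_distrib_left)
qed

lemma L_frobenius:
  "z ^ (2 ^ i) * L a z ^ (2 ^ i)
     = (z ^ 3) ^ (2 ^ (i - 1)) + (z ^ 3) ^ (2 ^ i) + a * z ^ e + (a * z ^ e) ^ (2 ^ i)"
proof -
  define h :: nat where "h = 2 ^ (i - 1)"
  have t: "(2::nat) ^ i = 2 * h" unfolding h_def using i_pos by (cases i) auto
  have "n - 1 + i = n * 1 + (i - 1)" using i_pos n_pos by simp
  hence "(z ^ (2 ^ (n - 1))) ^ (2 ^ i) = z ^ h"
    unfolding h_def by (simp only: power_power_two_pow power_two_pow_reduce)
  moreover have "((a * z) ^ (2 ^ (n - i))) ^ (2 ^ i) = a * z"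
    using i_less_n by (simp add: power_power_two_pow power_two_pow_n)
  ultimately have "L a z ^ (2 ^ i) = z ^ h + (z ^ 2) ^ (2 ^ i) + a * z + (a * z ^ (2 ^ i)) ^ (2 ^ i)"
    unfolding L_def frobenius_add by simp
  thus ?thesis unfolding t h_def[symmetric]
    by (simp add: algebra_simps power_add[symmetric] power_mult[symmetric] power_mult_distrib)
qed

lemma L_eq_0_iff:
  assumes "z \<noteq> 0"
  shows "L a z = 0 \<longleftrightarrow> a * z ^ e = F (z ^ 3) \<or> a * z ^ e = F (z ^ 3) + 1"
proof -
  define c where "c = a * z ^ e + F (z ^ 3)"
  have "c + c ^ (2 ^ i) = (a * z ^ e + (a * z ^ e) ^ (2 ^ i)) + (F (z ^ 3) + F (z ^ 3) ^ (2 ^ i))"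
    unfolding c_def frobenius_add by (simp only: add_ac)
  also have "\<dots> = z ^ (2 ^ i) * L a z ^ (2 ^ i)"
    unfolding L_frobenius F_eq by (simp only: add_ac)
  finally have "L a z = 0 \<longleftrightarrow> c + c ^ (2 ^ i) = 0" using assms by simp
  also have "\<dots> \<longleftrightarrow> c ^ (2 ^ i) = c" by (auto simp: add_eq_0_iff_eq)
  also have "\<dots> \<longleftrightarrow> c = 0 \<or> c = 1" by (rule frobenius_fixed_iff[OF coprime_i_n i_pos])
  also have "\<dots> \<longleftrightarrow> a * z ^ e = F (z ^ 3) \<or> a * z ^ e = F (z ^ 3) + 1"
    using add_eq_0_iff_eq[of "a * z ^ e" "F (z ^ 3)"] add_eq_iff_eq_add[of "a * z ^ e" "F (z ^ 3)" 1]
    unfolding c_def by (simp only: add.commute)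
  finally show ?thesis .
qed

lemma radical_fiber:
  assumes "z \<noteq> 0"
  shows "{a. L a z = 0} = {F (z ^ 3) / z ^ e, (F (z ^ 3) + 1) / z ^ e}"
proof (intro set_eqI)
  fix a
  have "a * z ^ e = c \<longleftrightarrow> a = c / z ^ e" for c
    by (rule nonzero_eq_divide_eq[symmetric]) (use assms in simp)
  thus "a \<in> {a. L a z = 0} \<longleftrightarrow> a \<in> {F (z ^ 3) / z ^ e, (F (z ^ 3) + 1) / z ^ e}"
    by (simp only: mem_Collect_eq L_eq_0_iff[OF assms] insert_iff empty_iff simp_thms)
qed

lemma chi_Q_radical:
  assumes "z \<noteq> 0"
  shows "chi (Q (F (z ^ 3) / z ^ e) z) = 1" and "chi (Q ((F (z ^ 3) + 1) / z ^ e) z) = -1"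
proof -
  have "chi (F (z ^ 3)) = chi (z ^ 3)" by (simp add: chi_eq Tr_F)
  thus "chi (Q (F (z ^ 3) / z ^ e) z) = 1" and "chi (Q ((F (z ^ 3) + 1) / z ^ e) z) = -1"
    using assms by (simp_all add: Q_def chi_add chi_one[OF odd_n])
qed

lemma sum_N: "(\<Sum>a\<in>UNIV. N a) = int CARD('a)"
proof -
  have "(\<Sum>a\<in>UNIV. N a) = (\<Sum>a\<in>UNIV. \<Sum>z\<in>UNIV. if L a z = 0 then chi (Q a z) else 0)"
    unfolding N_def by (simp add: sum.If_cases)
  also have "\<dots> = (\<Sum>z\<in>UNIV. \<Sum>a\<in>UNIV. if L a z = 0 then chi (Q a z) else 0)"
    by (rule sum.swap)
  also have "\<dots> = (\<Sum>z\<in>UNIV. \<Sum>a\<in>{a. L a z = 0}. chi (Q a z))"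
    by (simp add: sum.If_cases)
  also have "\<dots> = (\<Sum>z::'a\<in>UNIV. if z = 0 then int CARD('a) else 0)"
  proof (rule sum.cong[OF refl])
    fix z :: 'a
    show "(\<Sum>a\<in>{a. L a z = 0}. chi (Q a z)) = (if z = 0 then int CARD('a) else 0)"
    proof (cases "z = 0")
      case False
      have "F (z ^ 3) / z ^ e \<noteq> (F (z ^ 3) + 1) / z ^ e" using False by (simp add: divide_cancel_right)
      thus ?thesis using False chi_Q_radical[OF False] by (simp add: radical_fiber)
    qed simp
  qed
  also have "\<dots> = int CARD('a)" by (simp only: sum.delta[OF finite] UNIV_I if_True)
  finally show ?thesis .
qed

lemma N_nonneg: "0 \<le> N a"
proof -
  have "int CARD('a) * 0 \<le> int CARD('a) * N a" using W_square[of a] by (metis zero_le_power2 mult_zero_right)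
  thus ?thesis by (subst (asm) mult_le_cancel_left_pos) simp_all
qed

lemma N_neq_1: "N a \<noteq> 1"
proof
  assume "N a = 1"
  hence "(W a) ^ 2 = 2 ^ n" using W_square card_eq by simp
  moreover obtain k where "n = 2 * k + 1" using odd_n by (rule oddE)
  ultimately show False using square_neq_two_power_odd[of "W a" k] by simp
qed

definition E :: "'a set" where
  "E = {x. Tr n (x ^ e) = 1}"

lemma mem_E_iff: "x \<in> E \<longleftrightarrow> Tr n (x ^ e) \<noteq> 0"
  using Tr_cases[of "x ^ e"] by (auto simp: E_def)

lemma N_ge_2:
  assumes "a \<in> E"
  shows "2 \<le> N a"
proof -
  let ?R = "{z. L a z = 0}"
  have "chi (Q a z) = 1" if "z \<in> ?R" for z
  proof (cases "z = 0")
    case False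
    have "a \<noteq> (F (z ^ 3) + 1) / z ^ e" using Tr_shifted_root[OF False] assms by (auto simp: mem_E_iff)
    hence "a = F (z ^ 3) / z ^ e" using that radical_fiber[OF False] by blast
    thus ?thesis using chi_Q_radical(1)[OF False] by simp
  qed simp
  hence "N a = int (card ?R)" unfolding N_def by simp
  moreover have "0 \<in> ?R" by simp
  hence "card ?R \<noteq> 0" by (metis card_0_eq finite empty_iff)
  ultimately show ?thesis using N_neq_1[of a] by linarith
qed

lemma card_E: "2 * int (card E) = int CARD('a)"
proof -
  have "(\<Sum>x\<in>UNIV. chi (x ^ e)) = 0"
    using sum_comp_inj_UNIV[OF inj_power_e, of chi] sum_chi by simp
  moreover have "(\<Sum>x\<in>UNIV. chi (x ^ e)) = (\<Sum>x\<in>UNIV. 1 - 2 * of_bool (x \<in> E))"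
    by (intro sum.cong refl) (simp add: chi_eq mem_E_iff)
  ultimately show ?thesis by (simp add: sum_subtractf sum_distrib_left[symmetric])
qed

lemma N_eq: "N a = (if a \<in> E then 2 else 0)"
proof -
  define g where "g a = N a - (if a \<in> E then 2 else 0)" for a
  have "(\<Sum>a\<in>UNIV. (if a \<in> E then 2 else 0 :: int)) = 2 * int (card E)"
    by (simp add: sum.If_cases)
  hence "(\<Sum>a\<in>UNIV. g a) = 0"
    unfolding g_def using sum_N card_E by (simp add: sum_subtractf)
  moreover have "0 \<le> g a" for a
    unfolding g_def using N_nonneg N_ge_2 by auto
  ultimately have "g a = 0" using sum_nonneg_eq_0_iff[of UNIV g] by simp
  thus ?thesis unfolding g_def by simp
qed

lemma A_eq: "A l = 2 * (\<Sum>a\<in>E. chi (a * l))"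
proof -
  have "int CARD('a) * A l = int CARD('a) * (\<Sum>a\<in>UNIV. chi (a * l) * N a)"
    unfolding A_eq_sum_W_square W_square by (simp add: sum_distrib_left mult_ac)
  hence "A l = (\<Sum>a\<in>UNIV. chi (a * l) * N a)" by simp
  also have "\<dots> = (\<Sum>a\<in>UNIV. if a \<in> E then 2 * chi (a * l) else 0)"
    by (intro sum.cong refl) (simp add: N_eq)
  finally show ?thesis by (simp add: sum.If_cases sum_distrib_left)
qed

definition D :: "'a \<Rightarrow> 'a" where
  "D x = (x + 1) ^ s + x ^ s"

lemma D_add_1: "D (x + 1) = D x"
proof -
  have "x + 1 + 1 = x" by (simp add: add.assoc)
  thus ?thesis unfolding D_def by (simp add: add.commute)
qed

lemma sum_chi_D: "(\<Sum>x\<in>UNIV. chi (l ^ s * D x)) = A l"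
proof (cases "l = 0")
  case True
  thus ?thesis unfolding A_def D_def by (cases s) simp_all
next
  case False
  have "l ^ s * D x = (l * x + l) ^ s + (l * x) ^ s" for x
    unfolding D_def by (simp add: distrib_left power_mult_distrib[symmetric])
  moreover have "inj ((*) l)" using False by (simp add: inj_on_def)
  ultimately show ?thesis
    unfolding A_def using sum_comp_inj_UNIV[of "(*) l" "\<lambda>y. chi ((y + l) ^ s + y ^ s)"] by simp
qed

lemma sum_D_eq_twice_sum_Tr_zero:
  "(\<Sum>x\<in>UNIV. \<phi> (D x) :: int) = 2 * (\<Sum>x\<in>{x. Tr n x = 0}. \<phi> (D x))"
proof -
  define g h where "g x = (if Tr n x = 0 then \<phi> (D x) else 0)"
    and "h x = (if Tr n x \<noteq> 0 then \<phi> (D x) else 0)" for x :: 'a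
  have "h (1 + x) = g x" for x
    using Tr_cases[of x] D_add_1[of x] by (auto simp: g_def h_def Tr_add Tr_one[OF odd_n] add.commute)
  hence "(\<Sum>x\<in>UNIV. h x) = (\<Sum>x\<in>UNIV. g x)" using sum_add_shift_UNIV[of h 1] by simp
  moreover have "(\<Sum>x\<in>UNIV. \<phi> (D x)) = (\<Sum>x\<in>UNIV. g x) + (\<Sum>x\<in>UNIV. h x)"
    unfolding sum.distrib[symmetric] g_def h_def by (intro sum.cong refl) simp
  ultimately show ?thesis unfolding g_def by (simp add: sum.If_cases)
qed

lemma sum_square_sum_chi_D:
  assumes "inj (\<lambda>x::'a. x ^ s)"
  shows "(\<Sum>\<mu>\<in>UNIV. (\<Sum>x\<in>UNIV. chi (\<mu> * D x)) ^ 2) = 2 * int CARD('a) ^ 2"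
proof -
  let ?g = "\<lambda>y. if y \<in> E then 2 else 0 :: int"
  have "A l = (\<Sum>y\<in>UNIV. ?g y * chi (l * y))" for l
  proof -
    have "(\<Sum>y\<in>UNIV. ?g y * chi (l * y)) = (\<Sum>y\<in>UNIV. if y \<in> E then 2 * chi (y * l) else 0)"
      by (intro sum.cong refl) (simp add: mult.commute)
    thus ?thesis unfolding A_eq by (simp add: sum.If_cases sum_distrib_left)
  qed
  hence "(\<Sum>l\<in>UNIV. (A l) ^ 2) = int CARD('a) * (\<Sum>y\<in>UNIV. (?g y) ^ 2)"
    by (simp only: parseval)
  also have "(\<Sum>y\<in>UNIV. (?g y) ^ 2) = (\<Sum>y\<in>UNIV. if y \<in> E then 4 else 0)"
    by (intro sum.cong refl) simp
  also have "\<dots> = 2 * int CARD('a)"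
    using card_E by (simp add: sum.If_cases)
  finally show ?thesis
    using sum_comp_inj_UNIV[OF assms, of "\<lambda>\<mu>. (\<Sum>x\<in>UNIV. chi (\<mu> * D x)) ^ 2"]
    by (simp add: sum_chi_D power2_eq_square)
qed

text \<open>Parseval for \<open>D\<close> and for \<open>A\<close> yields \<open>\<Sum>m\<^sup>2 = \<Sum>m\<close> for the fibre sizes \<open>m\<close> of \<open>D\<close>.\<close>
lemma inj_on_D:
  assumes "inj (\<lambda>x::'a. x ^ s)"
  shows "inj_on D {x. Tr n x = 0}"
proof -
  let ?T = "{x::'a. Tr n x = 0}"
  define m where "m y = int (card {x \<in> ?T. D x = y})" for y
  have fiber: "(\<Sum>x\<in>?T. \<phi> (D x)) = (\<Sum>y\<in>UNIV. m y * \<phi> y)" for \<phi> :: "'a \<Rightarrow> int"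
    unfolding m_def by (subst sum.group[symmetric, of ?T UNIV D]) auto
  have "(\<Sum>x\<in>UNIV. chi (\<mu> * D x)) = (\<Sum>y\<in>UNIV. 2 * m y * chi (\<mu> * y))" for \<mu>
    using sum_D_eq_twice_sum_Tr_zero[of "\<lambda>y. chi (\<mu> * y)"] fiber[of "\<lambda>y. chi (\<mu> * y)"]
    by (simp add: sum_distrib_left mult.assoc)
  hence "(\<Sum>\<mu>\<in>UNIV. (\<Sum>x\<in>UNIV. chi (\<mu> * D x)) ^ 2) = int CARD('a) * (\<Sum>y\<in>UNIV. (2 * m y) ^ 2)"
    by (simp only: parseval)
  hence "int CARD('a) * (4 * (\<Sum>y\<in>UNIV. (m y) ^ 2)) = int CARD('a) * (2 * int CARD('a))"
    using sum_square_sum_chi_D[OF assms] by (simp add: power_mult_distrib sum_distrib_left power2_eq_square)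
  hence sum_m_square: "2 * (\<Sum>y\<in>UNIV. (m y) ^ 2) = int CARD('a)"
    by simp
  have sum_m: "2 * (\<Sum>y\<in>UNIV. m y) = int CARD('a)"
    using sum_D_eq_twice_sum_Tr_zero[of "\<lambda>_. 1"] fiber[of "\<lambda>_. 1"] by simp
  have "(\<Sum>y\<in>UNIV. m y * (m y - 1)) = 0"
    using sum_m_square sum_m by (simp add: algebra_simps power2_eq_square sum_subtractf)
  moreover have "0 \<le> int k * (int k - 1)" for k by (cases k) auto
  hence "0 \<le> m y * (m y - 1)" for y unfolding m_def .
  ultimately have "m y * (m y - 1) = 0" for y
    using sum_nonneg_eq_0_iff[of UNIV "\<lambda>y. m y * (m y - 1)"] by simp
  moreover have "k \<le> 1" if "int k * (int k - 1) = 0" for k using that by (cases k) auto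
  ultimately have "card {x \<in> ?T. D x = y} \<le> 1" for y unfolding m_def by blast
  thus ?thesis
    by (intro inj_onI) (use card_le_Suc0_iff_eq[of "{x \<in> ?T. D x = _}"] in fastforce)
qed

theorem walsh_values_D_eq_walsh_E:
  assumes "inj (\<lambda>x::'a. x ^ s)"
  shows "walsh n (charf {(x + 1) ^ s + x ^ s | x. True}) (l ^ s) = walsh n (charf E) l"
proof -
  let ?T = "{x::'a. Tr n x = 0}"
  have "s \<noteq> 0"
  proof
    assume "s = 0"
    hence "inj (\<lambda>x::'a. 1::'a)" using assms by simp
    hence "(0::'a) = 1" by (rule injD) simp
    thus False by simp
  qed
  hence l0: "l ^ s = 0 \<longleftrightarrow> l = 0" by simp
  have "{(x + 1) ^ s + x ^ s | x. True} = D ` ?T"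
  proof -
    have "D x \<in> D ` ?T" for x
      using Tr_cases[of x] D_add_1[of x] Tr_one[OF odd_n]
      by (metis (mono_tags) image_eqI mem_Collect_eq Tr_add add_self)
    thus ?thesis unfolding D_def by auto
  qed
  hence "2 * (\<Sum>y\<in>{(x + 1) ^ s + x ^ s | x. True}. chi (l ^ s * y)) = A l"
    using sum.reindex[OF inj_on_D[OF assms], of "\<lambda>y. chi (l ^ s * y)"]
      sum_D_eq_twice_sum_Tr_zero[of "\<lambda>y. chi (l ^ s * y)"] sum_chi_D[of l] by simp
  thus ?thesis
    unfolding walsh_charf A_eq l0 by (simp add: mult.commute)
qed

end

context gf2n
begin

lemma Tr_power_kasami_3i_minus_1:
  assumes "n = 3 * i - 1" and "0 < i"
  shows "Tr n (((u::'a) ^ (2 ^ i + 1)) ^ (2 ^ (2 * i) - 2 ^ i + 1)) = Tr n (u ^ 3)"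
proof -
  have "3 * i = n * 1 + 1" using assms by simp
  hence "u ^ (2 ^ (3 * i)) = u ^ 2" by (simp only: power_two_pow_reduce) simp
  hence "(u ^ (2 ^ i + 1)) ^ (2 ^ (2 * i) - 2 ^ i + 1) = u ^ 3"
    by (simp only: power_mult[symmetric] kasami_exponent_product)
      (simp add: power_add power3_eq_cube power2_eq_square)
  thus ?thesis by simp
qed

lemma Tr_power_kasami_3i_plus_1:
  assumes "n = 3 * i + 1"
  shows "Tr n (((u::'a) ^ (2 ^ i + 1)) ^ (2 ^ (2 * i) - 2 ^ i + 1)) = Tr n (u ^ 3)"
proof -
  have "(u ^ (2 ^ i + 1)) ^ (2 ^ (2 * i) - 2 ^ i + 1) = u ^ (2 ^ (3 * i)) * u"
    by (simp only: power_mult[symmetric] kasami_exponent_product) (simp only: power_add power_one_right)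
  moreover have "(u ^ (2 ^ (3 * i))) ^ 2 = u"
    using power_power_two_pow[of u "3 * i" 1] power_two_pow_n[of u] assms by simp
  hence "(u ^ (2 ^ (3 * i)) * u) ^ 2 = u ^ 3"
    by (simp only: power_mult_distrib) (simp add: power3_eq_cube power2_eq_square)
  ultimately show ?thesis by (metis Tr_square)
qed

lemma Tr_shifted_root_3i_minus_1:
  assumes n: "n = 3 * i - 1" and "0 < i" and "(z::'a) \<noteq> 0"
  shows "Tr n (((z ^ 3 + (z ^ 3) ^ (2 ^ (2 * i - 1)) + (z ^ 3) ^ (2 ^ (i - 1)) + 1) / z ^ (2 ^ i + 1))
           ^ (2 ^ i + 1)) = 0"
proof -
  obtain y :: 'a where y: "y ^ (2 ^ (2 * i)) = z" using frobenius_surj by blast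
  hence "y \<noteq> 0" using assms(3) by (auto simp: power_0_left)
  define y1 where "y1 = y ^ (2 ^ i)"
  have exps: "i + i = 2 * i" "2 * i + i = n + 1" "2 * i + (2 * i - 1) = n + i" "2 * i + (i - 1) = n + 0"
    using n assms(2) by simp_all
  have z_eq: "y1 ^ (2 ^ i) = z" and cycle: "z ^ (2 ^ i) = y ^ 2"
    and "z ^ (2 ^ (2 * i - 1)) = y1" and "z ^ (2 ^ (i - 1)) = y"
    unfolding y1_def y[symmetric] power_power_two_pow exps power_two_pow_n_add by simp_all
  hence "(z ^ 3 + (z ^ 3) ^ (2 ^ (2 * i - 1)) + (z ^ 3) ^ (2 ^ (i - 1)) + 1) / z ^ (2 ^ i + 1)
      = (1 + y ^ 3 + y1 ^ 3 + z ^ 3) / (y ^ 2 * z)"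
    by (simp add: cube_power_two_pow power_add add_ac)
  moreover have "Tr n (X * X ^ (2 ^ i)) = 0" if "X = (1 + y ^ 3 + y1 ^ 3 + z ^ 3) / (y ^ 2 * z)" for X
    unfolding that by (rule Tr_frobenius_cycle[OF \<open>y \<noteq> 0\<close> y1_def[symmetric] z_eq cycle])
  ultimately show ?thesis by (simp add: power_add mult.commute)
qed

lemma Tr_shifted_root_3i_plus_1:
  assumes n: "n = 3 * i + 1" and "(z::'a) \<noteq> 0"
  shows "Tr n ((((z ^ 3) ^ (2 ^ i) + (z ^ 3) ^ (2 ^ (2 * i)) + (z ^ 3) ^ (2 ^ (3 * i)) + 1) / z ^ (2 ^ i + 1))
           ^ (2 ^ i + 1)) = 0"
proof -
  obtain y :: 'a where y: "y ^ (2 ^ 1) = z" using frobenius_surj by blast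
  hence "y \<noteq> 0" using assms(2) by (auto simp: power_0_left)
  define k where "k = 2 * i + 1"
  define y1 y2 where "y1 = y ^ (2 ^ k)" and "y2 = z ^ (2 ^ i)"
  have exps: "k + k = n + (1 + i)" "1 + i + k = n + 1" "1 + 2 * i = k" "1 + 3 * i = n + 0" "i + k = n + 0"
    using n by (simp_all add: k_def)
  have cycle: "y1 ^ (2 ^ k) = y2" "y2 ^ (2 ^ k) = y ^ 2"
    and "z ^ (2 ^ (2 * i)) = y1" and "z ^ (2 ^ (3 * i)) = y"
    unfolding y1_def y2_def y[symmetric] power_power_two_pow exps power_two_pow_n_add by simp_all
  hence "((z ^ 3) ^ (2 ^ i) + (z ^ 3) ^ (2 ^ (2 * i)) + (z ^ 3) ^ (2 ^ (3 * i)) + 1) / z ^ (2 ^ i + 1)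
      = (1 + y ^ 3 + y1 ^ 3 + y2 ^ 3) / (y ^ 2 * y2)"
    using y by (simp add: cube_power_two_pow y2_def power_add add_ac mult.commute power2_eq_square)
  moreover have "Tr n (X ^ (2 ^ i + 1)) = 0" if "X = (1 + y ^ 3 + y1 ^ 3 + y2 ^ 3) / (y ^ 2 * y2)" for X
  proof -
    have "(X ^ (2 ^ i) * X) ^ (2 ^ k) = X * X ^ (2 ^ k)"
      using exps(5) by (simp add: power_mult_distrib power_power_two_pow power_two_pow_n)
    hence "Tr n (X ^ (2 ^ i + 1)) = Tr n (X * X ^ (2 ^ k))" by (metis Tr_power_two_pow power_add power_one_right)
    also have "\<dots> = 0"
      unfolding that by (rule Tr_frobenius_cycle[OF \<open>y \<noteq> 0\<close> y1_def[symmetric] cycle])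
    finally show ?thesis .
  qed
  ultimately show ?thesis by simp
qed

lemma kasami_3i_minus_1:
  assumes n: "n = 3 * i - 1" and "even i" and "0 < i"
  shows "kasami n i (2 ^ (2 * i) - 2 ^ i + 1) (\<lambda>w::'a. w + w ^ (2 ^ (2 * i - 1)) + w ^ (2 ^ (i - 1)))"
proof -
  have "2 \<le> i" using assms(2,3) by presburger
  hence exps: "2 * i - 1 + i = n + 0" "i - 1 + i = 2 * i - 1" using n by simp_all
  have "coprime (3 * i) n" using n \<open>2 \<le> i\<close> coprime_diff_one_right_nat[of "3 * i"] by simp
  show ?thesis
  proof unfold_locales
    show "odd n" "0 < i" "i < n" using n \<open>2 \<le> i\<close> \<open>even i\<close> by presburger+
    show "coprime i n" using \<open>coprime (3 * i) n\<close> by simp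
    show "(w + w ^ (2 ^ (2 * i - 1)) + w ^ (2 ^ (i - 1)))
        + (w + w ^ (2 ^ (2 * i - 1)) + w ^ (2 ^ (i - 1))) ^ (2 ^ i)
        = w ^ (2 ^ i) + w ^ (2 ^ (i - 1))" for w :: 'a
      unfolding frobenius_add power_power_two_pow exps power_two_pow_n_add by (simp add: add_ac add_self_left)
    show "Tr n (w + w ^ (2 ^ (2 * i - 1)) + w ^ (2 ^ (i - 1))) = Tr n w" for w :: 'a
      by (simp add: Tr_add Tr_power_two_pow)
    show "Tr n (((z ^ 3 + (z ^ 3) ^ (2 ^ (2 * i - 1)) + (z ^ 3) ^ (2 ^ (i - 1)) + 1) / z ^ (2 ^ i + 1))
        ^ (2 ^ i + 1)) = 0" if "z \<noteq> 0" for z :: 'a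
      by (rule Tr_shifted_root_3i_minus_1[OF n \<open>0 < i\<close> that])
    show "Tr n ((u ^ (2 ^ i + 1)) ^ (2 ^ (2 * i) - 2 ^ i + 1)) = Tr n (u ^ 3)" for u :: 'a
      by (rule Tr_power_kasami_3i_minus_1[OF n \<open>0 < i\<close>])
  qed
qed

lemma kasami_3i_plus_1:
  assumes n: "n = 3 * i + 1" and "even i" and "0 < i"
  shows "kasami n i (2 ^ (2 * i) - 2 ^ i + 1)
           (\<lambda>w::'a. w ^ (2 ^ i) + w ^ (2 ^ (2 * i)) + w ^ (2 ^ (3 * i)))"
proof -
  have exps: "i + i = 2 * i" "2 * i + i = 3 * i" "3 * i + i = n + (i - 1)" using n assms(3) by simp_all
  have "coprime (3 * i) n" using n by simp
  show ?thesis
  proof unfold_locales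
    show "odd n" "0 < i" "i < n" using n \<open>0 < i\<close> \<open>even i\<close> by presburger+
    show "coprime i n" using \<open>coprime (3 * i) n\<close> by simp
    show "(w ^ (2 ^ i) + w ^ (2 ^ (2 * i)) + w ^ (2 ^ (3 * i)))
        + (w ^ (2 ^ i) + w ^ (2 ^ (2 * i)) + w ^ (2 ^ (3 * i))) ^ (2 ^ i)
        = w ^ (2 ^ i) + w ^ (2 ^ (i - 1))" for w :: 'a
      unfolding frobenius_add power_power_two_pow exps power_two_pow_n_add by (simp add: add_ac add_self_left)
    show "Tr n (w ^ (2 ^ i) + w ^ (2 ^ (2 * i)) + w ^ (2 ^ (3 * i))) = Tr n w" for w :: 'a
      by (simp add: Tr_add Tr_power_two_pow)
    show "Tr n ((((z ^ 3) ^ (2 ^ i) + (z ^ 3) ^ (2 ^ (2 * i)) + (z ^ 3) ^ (2 ^ (3 * i)) + 1)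
        / z ^ (2 ^ i + 1)) ^ (2 ^ i + 1)) = 0" if "z \<noteq> 0" for z :: 'a
      by (rule Tr_shifted_root_3i_plus_1[OF n that])
    show "Tr n ((u ^ (2 ^ i + 1)) ^ (2 ^ (2 * i) - 2 ^ i + 1)) = Tr n (u ^ 3)" for u :: 'a
      by (rule Tr_power_kasami_3i_plus_1[OF n])
  qed
qed

end

theorem proposition17:
  fixes i n s d :: nat
    and \<mu> :: "'a::{field,finite}"
  assumes "even i" and "i > 0"
    and "n = 3 * i + 1 \<or> n = 3 * i - 1"
    and "CARD('a) = 2 ^ n"
    and "s = 2 ^ (2 * i) - 2 ^ i + 1"
    and "(s * d) mod (2 ^ n - 1) = 1"
  shows "walsh n (charf {(x + 1) ^ s + x ^ s | x::'a. True}) \<mu>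
           = walsh n (charf {x::'a. Tr n (x ^ (2 ^ i + 1)) = 1}) (\<mu> ^ d)
       \<and> walsh n (charf {x::'a. Tr n (x ^ (2 ^ i + 1)) = 1}) (\<mu> ^ d)
           = (\<Sum>x\<in>(UNIV::'a set). (-1::int) ^ of_bool (Tr_bit n (x ^ (2 ^ i + 1) + \<mu> ^ d * x)))"
proof -
  interpret gf2n n "TYPE('a)" by unfold_locales (rule assms(4))
  have "\<exists>F::'a \<Rightarrow> 'a. kasami n i s F"
    using assms(3) kasami_3i_plus_1[OF _ assms(1,2)] kasami_3i_minus_1[OF _ assms(1,2)]
    unfolding assms(5) by blast
  then obtain F :: "'a \<Rightarrow> 'a" where "kasami n i s F" ..
  then interpret kasami n "TYPE('a)" i s F .
  have inverse: "(x ^ d) ^ s = x" for x :: 'a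
    using finite_field_power_inverse_exponent[of s d x] assms(4,6) by simp
  have "(x ^ s) ^ d = x" for x :: 'a using inverse[of x] by (metis power_mult mult.commute)
  hence "inj (\<lambda>x::'a. x ^ s)" by (intro inj_on_inverseI)
  hence "walsh n (charf {(x + 1) ^ s + x ^ s | x::'a. True}) \<mu> = walsh n (charf E) (\<mu> ^ d)"
    using walsh_values_D_eq_walsh_E[of "\<mu> ^ d"] by (simp add: inverse)
  moreover have "walsh n (charf E) (\<mu> ^ d)
      = (\<Sum>x\<in>UNIV. (-1::int) ^ of_bool (Tr_bit n (x ^ (2 ^ i + 1) + \<mu> ^ d * x)))"
    unfolding E_def walsh_charf_Tr_eq_1 chi_def ..
  ultimately show ?thesis unfolding E_def by simp
qed

end
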